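(* Let $\{a(n)\}_{n\in\mathbb{N}}$ be a sequence of non-negative numbers with $\sum_{n=1}^{\infty}a(n)\le 1$. Then for every $\varepsilon>0$ there exist infinitely many $n\in\mathbb{N}$ such that $\sum_{\ell=1}^{n}a(\ell\cdot n)<\frac{\varepsilon}{n}$. *)

theory Defs
  imports "HOL-Analysis.Analysis"
begin

end

theory Submission
  imports Defs "HOL-Computational_Algebra.Squarefree"
begin

text \<open>
  For distinct primes \<open>p \<noteq> q\<close> the products \<open>l * p\<close> (\<open>1 \<le> l \<le> p\<close>) and \<open>l' * q\<close>
  (\<open>1 \<le> l' \<le> q\<close>) never coincide, since \<open>p\<close> would have to divide \<open>l' \<le> q\<close> and \<open>q\<close> divide
  \<open>l \<le> p\<close>. Hence the block sums \<open>S p = \<Sum>l=1..p. a (l * p)\<close> over primes \<open>p\<close> are sums over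
  disjoint sets of indices, and \<open>\<Sum>\<^sub>p S p\<close> converges (only this, not the bound \<open>1\<close>, is
  needed). If \<open>S p \<ge> \<epsilon> / p\<close> held for all large \<open>p\<close>, the series of reciprocals of the
  primes would converge too, contradicting Euler's theorem, for which we give Erd\<H>os's
  counting proof.
\<close>

lemma prod_prime_factors_squarefree:
  assumes "squarefree (r::nat)"
  shows "\<Prod>(prime_factors r) = r"
proof -
  have "r \<noteq> 0" using assms by (metis not_squarefree_0)
  then have "(\<Prod>p \<in> prime_factors r. p ^ multiplicity p r) = r"
    using prod_prime_factors[OF \<open>r \<noteq> 0\<close>] by simp
  moreover have "\<forall>p\<in>prime_factors r. multiplicity p r = 1"
    using assms squarefree_factorial_semiring'[OF \<open>r \<noteq> 0\<close>] by blast
  ultimately show ?thesis by simp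
qed

lemma card_multiples_le:
  assumes "p > 0"
  shows "real (card {n\<in>{1..x::nat}. p dvd n}) \<le> real x / real p"
proof -
  have "{n\<in>{1..x}. p dvd n} \<subseteq> (\<lambda>j. p * j) ` {1..x div p}"
  proof
    fix n assume n: "n \<in> {n\<in>{1..x}. p dvd n}"
    then obtain j where j: "n = p * j" by auto
    have "j \<ge> 1" using n j by (cases j) auto
    moreover have "j \<le> x div p" using n j assms
      by (metis atLeastAtMost_iff div_le_mono mem_Collect_eq nonzero_mult_div_cancel_left not_gr0)
    ultimately show "n \<in> (\<lambda>j. p * j) ` {1..x div p}" using j by auto
  qed
  then have "card {n\<in>{1..x}. p dvd n} \<le> card ((\<lambda>j. p * j) ` {1..x div p})"
    by (intro card_mono) auto
  also have "\<dots> \<le> x div p"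
    using card_image_le[of "{1..x div p}" "\<lambda>j. p * j"] by simp
  finally have "real (card {n\<in>{1..x}. p dvd n}) \<le> real (x div p)" by simp
  also have "\<dots> \<le> real x / real p" by (rule of_nat_div_le_of_nat)
  finally show ?thesis .
qed

lemma card_with_large_prime_factor_le:
  "real (card {n\<in>{1..x::nat}. \<exists>p. prime p \<and> k < p \<and> p dvd n})
     \<le> real x * (\<Sum>p | prime p \<and> k < p \<and> p \<le> x. 1 / real p)"
proof -
  define P where "P = {p. prime p \<and> k < p \<and> p \<le> x}"
  have fin: "finite P" unfolding P_def by (rule finite_subset[of _ "{..x}"]) auto
  have "{n\<in>{1..x}. \<exists>p. prime p \<and> k < p \<and> p dvd n} \<subseteq> (\<Union>p\<in>P. {n\<in>{1..x}. p dvd n})"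
  proof clarify
    fix n p assume "n \<in> {1..x}" "prime p" "k < p" "p dvd n"
    moreover from this have "p \<le> x" using dvd_imp_le[of p n] by simp
    ultimately show "n \<in> (\<Union>p\<in>P. {n\<in>{1..x}. p dvd n})" unfolding P_def by blast
  qed
  then have "card {n\<in>{1..x}. \<exists>p. prime p \<and> k < p \<and> p dvd n}
               \<le> card (\<Union>p\<in>P. {n\<in>{1..x}. p dvd n})"
    using fin by (intro card_mono) auto
  also have "\<dots> \<le> (\<Sum>p\<in>P. card {n\<in>{1..x}. p dvd n})"
    using fin by (rule card_UN_le)
  finally have "real (card {n\<in>{1..x}. \<exists>p. prime p \<and> k < p \<and> p dvd n})
                  \<le> (\<Sum>p\<in>P. real (card {n\<in>{1..x}. p dvd n}))"
    by (simp only: of_nat_sum[symmetric] of_nat_le_iff)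
  also have "\<dots> \<le> (\<Sum>p\<in>P. real x / real p)"
    by (intro sum_mono card_multiples_le) (auto simp: P_def prime_gt_0_nat)
  finally show ?thesis by (simp add: P_def sum_distrib_left)
qed

text \<open>Every \<open>n\<close> factors as a squarefree part, determined by a subset of \<open>{..k}\<close> when all prime
  factors of \<open>n\<close> are at most \<open>k\<close>, times a square \<open>s\<^sup>2 \<le> n\<close>.\<close>

lemma card_smooth_le:
  "card {n\<in>{1..T*T::nat}. \<forall>p. prime p \<and> p dvd n \<longrightarrow> p \<le> k} \<le> 2 ^ (k + 1) * T"
proof -
  define h where "h = (\<lambda>(S::nat set, s::nat). \<Prod>S * s\<^sup>2)"
  have "{n\<in>{1..T*T}. \<forall>p. prime p \<and> p dvd n \<longrightarrow> p \<le> k} \<subseteq> h ` (Pow {..k} \<times> {1..T})"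
  proof
    fix n assume n: "n \<in> {n\<in>{1..T*T}. \<forall>p. prime p \<and> p dvd n \<longrightarrow> p \<le> k}"
    have dec: "n = squarefree_part n * (square_part n)\<^sup>2" by (rule squarefree_decompose)
    have "(square_part n)\<^sup>2 \<le> n"
      using n by (intro dvd_imp_le square_part_square_dvd) auto
    then have "(square_part n)\<^sup>2 \<le> T\<^sup>2" using n by (simp add: power2_eq_square)
    then have "square_part n \<le> T" by (rule power2_le_imp_le) simp
    moreover have "square_part n \<ge> 1" using n square_part_0_iff[of n] by (cases "square_part n") auto
    moreover have "prime_factors (squarefree_part n) \<subseteq> {..k}"
    proof
      fix p assume p: "p \<in> prime_factors (squarefree_part n)"
      have "squarefree_part n dvd n" using dec by (metis dvd_triv_left)
      then show "p \<in> {..k}"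
        using n p dvd_trans[of p "squarefree_part n" n] by (auto simp: in_prime_factors_iff)
    qed
    moreover have "n = h (prime_factors (squarefree_part n), square_part n)"
      unfolding h_def using prod_prime_factors_squarefree[OF squarefree_squarefree_part] dec
      by simp
    ultimately show "n \<in> h ` (Pow {..k} \<times> {1..T})" by auto
  qed
  then have "card {n\<in>{1..T*T}. \<forall>p. prime p \<and> p dvd n \<longrightarrow> p \<le> k}
               \<le> card (h ` (Pow {..k} \<times> {1..T}))"
    by (intro card_mono) auto
  also have "\<dots> \<le> card (Pow {..k} \<times> {1..T})" by (rule card_image_le) simp
  also have "\<dots> = 2 ^ (k + 1) * T" by (simp add: card_Pow card_cartesian_product)
  finally show ?thesis .
qed

text \<open>Erd\<H>os: if the tail of the series beyond \<open>k\<close> were below \<open>1/2\<close>, then among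
  \<open>1, \<dots>, x\<close> with \<open>x = T\<^sup>2\<close>, \<open>T = 2^(k+3)\<close>, fewer than \<open>x/2\<close> numbers have a prime factor
  \<open>> k\<close> and at most \<open>x/4\<close> do not.\<close>

theorem not_summable_prime_inverse:
  "\<not> summable (\<lambda>n::nat. if prime n then 1 / real n else 0)"
proof
  define f where "f = (\<lambda>n::nat. if prime n then 1 / real n else 0)"
  assume "summable (\<lambda>n::nat. if prime n then 1 / real n else 0)"
  then have f: "summable f" by (simp add: f_def)
  have "(\<lambda>K. \<Sum>n<K. f n) \<longlonglongrightarrow> suminf f" using f by (rule summable_LIMSEQ)
  then have "eventually (\<lambda>K. suminf f - 1/2 < (\<Sum>n<K. f n)) sequentially"
    by (rule order_tendstoD) simp
  then obtain k where k: "suminf f - 1/2 < (\<Sum>n\<le>k. f n)"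
    unfolding eventually_sequentially lessThan_Suc_atMost[symmetric] by (meson le_Suc_eq order_refl)
  define T :: nat where "T = 2 ^ (k + 3)"
  define x where "x = T * T"
  have "k < T" unfolding T_def using less_exp[of k] power_increasing[of k "k + 3" "2::nat"]
    by linarith
  then have "k < x" unfolding x_def by (simp add: less_le_trans)
  define P where "P = {p. prime p \<and> k < p \<and> p \<le> x}"
  have "(\<Sum>n\<le>k. f n) + (\<Sum>p\<in>P. 1 / real p) = (\<Sum>n\<in>{..k} \<union> P. f n)"
    by (subst sum.union_disjoint) (auto simp: P_def f_def)
  also have "\<dots> \<le> suminf f" using f by (intro sum_le_suminf) (auto simp: P_def f_def)
  finally have "(\<Sum>p\<in>P. 1 / real p) < 1/2" using k by linarith
  then have tail: "real x * (\<Sum>p\<in>P. 1 / real p) < real x * (1/2)"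
    using \<open>k < x\<close> by (intro mult_strict_left_mono) simp_all
  define R where "R = {n\<in>{1..x}. \<exists>p. prime p \<and> k < p \<and> p dvd n}"
  define M where "M = {n\<in>{1..x}. \<forall>p. prime p \<and> p dvd n \<longrightarrow> p \<le> k}"
  have "real (card R) < real x / 2"
    using card_with_large_prime_factor_le[of x k] tail unfolding R_def P_def by simp
  moreover have "4 * card M \<le> x"
    using card_smooth_le[of T k] unfolding M_def x_def T_def by (simp add: power_add)
  moreover have "x \<le> card R + card M"
  proof -
    have "{1..x} = R \<union> M" unfolding R_def M_def by (auto simp: not_less)
    then have "card {1..x} \<le> card R + card M" by (subst \<open>{1..x} = R \<union> M\<close>) (rule card_Un_le)
    then show ?thesis by simp
  qed
  ultimately show False by linarith
qed

lemma prime_multiples_eqD: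
  fixes p q l l' :: nat
  assumes "prime p" "prime q" "1 \<le> l" "l \<le> p" "1 \<le> l'" "l' \<le> q" and eq: "l * p = l' * q"
  shows "p = q \<and> l = l'"
proof (cases "p = q")
  case True
  then show ?thesis using eq assms prime_gt_0_nat by auto
next
  case False
  then have "\<not> p dvd q" "\<not> q dvd p" using assms by (metis primes_dvd_imp_eq)+
  then have "p dvd l'" "q dvd l" using assms eq prime_dvd_mult_iff by (metis dvd_triv_right)+
  then have "p \<le> l'" "q \<le> l" using assms by (auto dest: dvd_imp_le)
  then show ?thesis using assms False by linarith
qed

lemma sum_prime_blocks_le_suminf:
  fixes a :: "nat \<Rightarrow> real"
  assumes nonneg: "\<And>n. n \<ge> 1 \<Longrightarrow> a n \<ge> 0" and summ: "summable (\<lambda>n. a (Suc n))"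
    and Q: "finite Q" "Q \<subseteq> {p. prime p}"
  shows "(\<Sum>p\<in>Q. \<Sum>l=1..p. a (l * p)) \<le> (\<Sum>n. a (Suc n))"
proof -
  define Sig where "Sig = (SIGMA p:Q. {1..p})"
  define g where "g = (\<lambda>(p, l). l * p - 1 :: nat)"
  have pos: "l * p \<ge> 1" if "(p, l) \<in> Sig" for p l
    using that Q prime_gt_0_nat unfolding Sig_def by (auto simp: Suc_le_eq)
  have "inj_on g Sig"
  proof (rule inj_onI)
    fix z w assume z: "z \<in> Sig" and w: "w \<in> Sig" and "g z = g w"
    obtain p l q l' where zw: "z = (p, l)" "w = (q, l')" by (cases z, cases w)
    have "l * p \<ge> 1" "l' * q \<ge> 1" using pos z w unfolding zw by blast+
    then have "l * p = l' * q" using \<open>g z = g w\<close> unfolding zw g_def prod.case by linarith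
    moreover have "prime p" "prime q" "1 \<le> l" "l \<le> p" "1 \<le> l'" "l' \<le> q"
      using z w Q unfolding zw Sig_def by auto
    ultimately show "z = w" unfolding zw using prime_multiples_eqD by blast
  qed
  have "(\<Sum>p\<in>Q. \<Sum>l=1..p. a (l * p)) = (\<Sum>z\<in>Sig. a (Suc (g z)))"
    unfolding Sig_def g_def using Q pos[unfolded Sig_def]
    by (auto simp: sum.Sigma intro!: sum.cong)
  also have "\<dots> = (\<Sum>n\<in>g ` Sig. a (Suc n))"
    using \<open>inj_on g Sig\<close> by (simp add: sum.reindex)
  also have "\<dots> \<le> (\<Sum>n. a (Suc n))"
    using summ nonneg Q by (intro sum_le_suminf) (auto simp: Sig_def)
  finally show ?thesis .
qed

lemma summable_prime_block_sums:
  fixes a :: "nat \<Rightarrow> real"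
  assumes nonneg: "\<And>n. n \<ge> 1 \<Longrightarrow> a n \<ge> 0" and summ: "summable (\<lambda>n. a (Suc n))"
  shows "summable (\<lambda>p. if prime p then \<Sum>l=1..p. a (l * p) else 0)"
proof (rule summableI_nonneg_bounded)
  fix K
  have "(\<Sum>p<K. if prime p then \<Sum>l=1..p. a (l * p) else 0)
          = (\<Sum>p\<in>{p. p < K \<and> prime p}. \<Sum>l=1..p. a (l * p))"
    by (simp add: sum.inter_filter[symmetric] Collect_conj_eq lessThan_def Int_commute)
  also have "\<dots> \<le> (\<Sum>n. a (Suc n))"
    by (rule sum_prime_blocks_le_suminf[OF nonneg summ]) auto
  finally show "(\<Sum>p<K. if prime p then \<Sum>l=1..p. a (l * p) else 0) \<le> (\<Sum>n. a (Suc n))" .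
qed (use nonneg prime_gt_0_nat in \<open>auto intro!: sum_nonneg\<close>)

theorem lemma5:
  fixes a :: "nat \<Rightarrow> real" and \<epsilon> :: real
  assumes nonneg: "\<And>n. n \<ge> 1 \<Longrightarrow> a n \<ge> 0"
    and summ: "summable (\<lambda>n. a (Suc n))"
    and le1: "(\<Sum>n. a (Suc n)) \<le> 1"
    and eps: "\<epsilon> > 0"
  shows "infinite {n::nat. n \<ge> 1 \<and> (\<Sum>l=1..n. a (l * n)) < \<epsilon> / real n}"
proof
  define S where "S = (\<lambda>p. if prime p then \<Sum>l=1..p. a (l * p) else 0)"
  assume "finite {n::nat. n \<ge> 1 \<and> (\<Sum>l=1..n. a (l * n)) < \<epsilon> / real n}"
  then obtain N where N: "\<And>n. n \<ge> 1 \<Longrightarrow> (\<Sum>l=1..n. a (l * n)) < \<epsilon> / real n \<Longrightarrow> n < N"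
    by (auto simp: finite_nat_set_iff_bounded)
  have "summable (\<lambda>p. S p / \<epsilon>)"
    unfolding S_def by (intro summable_divide summable_prime_block_sums nonneg summ)
  moreover have "eventually (\<lambda>p. norm (if prime p then 1 / real p else 0) \<le> S p / \<epsilon>) sequentially"
    unfolding eventually_sequentially
  proof (intro exI allI impI)
    fix p assume "N \<le> p"
    show "norm (if prime p then 1 / real p else 0) \<le> S p / \<epsilon>"
    proof (cases "prime p")
      case True
      then have "\<epsilon> / real p \<le> S p"
        using N[of p] \<open>N \<le> p\<close> prime_ge_1_nat unfolding S_def by force
      then show ?thesis using True eps by (simp add: field_simps)
    qed (use S_def eps in simp)
  qed
  ultimately have "summable (\<lambda>p::nat. if prime p then 1 / real p else 0)"
    by (rule summable_comparison_test_ev[rotated])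
  then show False using not_summable_prime_inverse by contradiction
qed

end
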